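(* Let $l,m,n\in\mathbb N$, $f:[l]\to[m]$, $g:[m]\to[n]$ and $H\in G[l]$. Then $(g\circ f)_{H*}=g_{Gf(H)*}\circ f_{H*}$ as maps $C(H)\to C(G(g\circ f)(H))$. Moreover, for every $l\in\mathbb N$ and $H\in G[l]$, $(\mathrm{id}_{[l]})_{H*}=\mathrm{id}_{C(H)}$.
   Context: $\mathbb N=\{0,1,2,\dots\}$, $[l]=\{0,\dots,l-1\}$. $G[l]$ is the set of hypergraphs on $[l]$, i.e. sets of non-empty subsets of $[l]$ (hyperedges); for $f:[l]\to[m]$, $Gf(H)=\{f(X)\mid X\in H\}$. $\mathsf A,\mathsf M$ are finite additive commutative monoids. For finite $X\subset\mathbb N$, $\mathsf A^X$ denotes functions $X\to\mathsf A$ and $\mathsf M^{\mathsf A^X}$ functions $\mathsf A^X\to\mathsf M$, both monoids under pointwise addition. For $\phi:X\to Y$ between finite subsets of $\mathbb N$, $\phi_\star:\mathsf A^X\to\mathsf A^Y$, $\phi_\star(w)(s)=\sum_{r\in X,\phi(r)=s}w(r)$, and $\phi_*:\mathsf M^{\mathsf A^X}\to\mathsf M^{\mathsf A^Y}$, $\phi_*(\varpi)(v)=\sum_{w:\phi_\star(w)=v}\varpi(w)$. A calibration $\varrho$ of $H\in G[l]$ assigns to each $X\in H$ an element $\varrho_X\in\mathsf M^{\mathsf A^X}$; $C(H)$ is the set of calibrations of $H$ (for $H=\emptyset$ it has exactly one element, the empty function). For $f:[l]\to[m]$, the push-forward $f_{H*}:C(H)\to C(Gf(H))$ is $f_{H*}(\varrho)_Y=\sum_{X\in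 H,\,f(X)=Y}(f|_X)_*(\varrho_X)$ for $Y\in Gf(H)$, where $f|_X:X\to f(X)$ is the restriction and the sum is taken in $\mathsf M^{\mathsf A^Y}$. *)

theory Defs
  imports Main
begin

definition hypergraphs :: "nat \<Rightarrow> nat set set set" where
  "hypergraphs l = {H. \<forall>X\<in>H. X \<noteq> {} \<and> X \<subseteq> {..<l}}"

definition Gmap :: "(nat \<Rightarrow> nat) \<Rightarrow> nat set set \<Rightarrow> nat set set" where
  "Gmap f H = (\<lambda>X. f ` X) ` H"

text \<open>A^X: functions X -> A, represented extensionally as functions nat -> A that are 0 off X.\<close>
definition Afuns :: "nat set \<Rightarrow> (nat \<Rightarrow> 'a::zero) set" where
  "Afuns X = {w. \<forall>r. r \<notin> X \<longrightarrow> w r = 0}"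

text \<open>M^(A^X): functions A^X -> M, represented as functions that are 0 off A^X.\<close>
definition Mfuns :: "nat set \<Rightarrow> ((nat \<Rightarrow> 'a::zero) \<Rightarrow> 'm::zero) set" where
  "Mfuns X = {\<rho>. \<forall>w. w \<notin> Afuns X \<longrightarrow> \<rho> w = 0}"

definition pushA :: "nat set \<Rightarrow> nat set \<Rightarrow> (nat \<Rightarrow> nat) \<Rightarrow> (nat \<Rightarrow> 'a::comm_monoid_add) \<Rightarrow> (nat \<Rightarrow> 'a)" where
  "pushA X Y \<phi> w = (\<lambda>s. if s \<in> Y then (\<Sum>r\<in>{r\<in>X. \<phi> r = s}. w r) else 0)"

definition pushM :: "nat set \<Rightarrow> nat set \<Rightarrow> (nat \<Rightarrow> nat) \<Rightarrow>
    ((nat \<Rightarrow> 'a::comm_monoid_add) \<Rightarrow> 'm::comm_monoid_add) \<Rightarrow> ((nat \<Rightarrow> 'a) \<Rightarrow> 'm)" where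
  "pushM X Y \<phi> \<rho> = (\<lambda>v. if v \<in> Afuns Y
       then (\<Sum>w\<in>{w\<in>Afuns X. pushA X Y \<phi> w = v}. \<rho> w) else 0)"

text \<open>Calibrations of H: assignments X |-> rho_X in M^(A^X) for X in H,
  represented extensionally (the zero function off H).\<close>
definition calibrations :: "nat set set \<Rightarrow>
    (nat set \<Rightarrow> (nat \<Rightarrow> 'a::zero) \<Rightarrow> 'm::zero) set" where
  "calibrations H = {\<rho>. (\<forall>X\<in>H. \<rho> X \<in> Mfuns X) \<and> (\<forall>X. X \<notin> H \<longrightarrow> \<rho> X = (\<lambda>_. 0))}"

definition push :: "(nat \<Rightarrow> nat) \<Rightarrow> nat set set \<Rightarrow>
    (nat set \<Rightarrow> (nat \<Rightarrow> 'a::comm_monoid_add) \<Rightarrow> 'm::comm_monoid_add) \<Rightarrow>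
    (nat set \<Rightarrow> (nat \<Rightarrow> 'a) \<Rightarrow> 'm)" where
  "push f H \<rho> = (\<lambda>Y. if Y \<in> Gmap f H
       then (\<lambda>v. \<Sum>X\<in>{X\<in>H. f ` X = Y}. pushM X Y f (\<rho> X) v)
       else (\<lambda>_. 0))"

end

theory Submission
  imports Defs
begin

text \<open>All three push-forwards (on A^X, on M^(A^X) and on calibrations) sum over the fibres
  of a map. Every fibre of g o f is the disjoint union of the fibres of f lying over one fibre
  of g, so composition amounts to regrouping a finite sum (sum.group), once at each of the
  three levels; the identity has singleton fibres.\<close>

lemma finite_Afuns:
  assumes "finite X"
  shows "finite (Afuns X :: (nat \<Rightarrow> 'a::{zero,finite}) set)"
proof -
  have "Afuns X = {w::nat \<Rightarrow> 'a. \<forall>x. (x \<in> X \<longrightarrow> w x \<in> UNIV) \<and> (x \<notin> X \<longrightarrow> w x = 0)}"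
    unfolding Afuns_def by auto
  then show ?thesis
    using finite_set_of_finite_funs[OF assms, of "UNIV :: 'a set" 0] by simp
qed

lemma pushA_in_Afuns: "pushA X Y f w \<in> Afuns Y"
  unfolding pushA_def Afuns_def by auto

lemma pushA_comp:
  assumes "finite X" and "Y = f ` X"
  shows "pushA Y Z g (pushA X Y f w) = pushA X Z (g \<circ> f) w"
proof
  fix s
  show "pushA Y Z g (pushA X Y f w) s = pushA X Z (g \<circ> f) w s"
  proof (cases "s \<in> Z")
    case True
    have "(\<Sum>r\<in>{r\<in>Y. g r = s}. pushA X Y f w r)
        = (\<Sum>r\<in>{r\<in>Y. g r = s}. \<Sum>x\<in>{x\<in>{x\<in>X. g (f x) = s}. f x = r}. w x)"
      by (rule sum.cong) (auto simp: pushA_def intro!: sum.cong)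
    also have "\<dots> = (\<Sum>x\<in>{x\<in>X. g (f x) = s}. w x)"
      by (rule sum.group) (use assms in auto)
    finally show ?thesis
      using True by (simp add: pushA_def)
  qed (simp add: pushA_def)
qed

lemma pushA_id:
  assumes "w \<in> Afuns Y"
  shows "pushA Y Y id w = w"
proof
  fix s
  have "s \<in> Y \<Longrightarrow> {r\<in>Y. id r = s} = {s}" by auto
  with assms show "pushA Y Y id w s = w s"
    unfolding pushA_def Afuns_def by auto
qed

lemma pushM_comp:
  fixes \<sigma> :: "(nat \<Rightarrow> 'a::{comm_monoid_add,finite}) \<Rightarrow> 'm::comm_monoid_add"
  assumes "finite X" and "Y = f ` X"
  shows "pushM Y Z g (pushM X Y f \<sigma>) = pushM X Z (g \<circ> f) \<sigma>"
proof
  fix v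
  show "pushM Y Z g (pushM X Y f \<sigma>) v = pushM X Z (g \<circ> f) \<sigma> v"
  proof (cases "v \<in> Afuns Z")
    case True
    have "finite Y" using assms by simp
    have "(\<Sum>u\<in>{u\<in>Afuns Y. pushA Y Z g u = v}. pushM X Y f \<sigma> u)
        = (\<Sum>u\<in>{u\<in>Afuns Y. pushA Y Z g u = v}.
             \<Sum>w\<in>{w\<in>{w\<in>Afuns X. pushA X Z (g \<circ> f) w = v}. pushA X Y f w = u}. \<sigma> w)"
      by (rule sum.cong) (auto simp: pushM_def pushA_comp[OF assms] intro!: sum.cong)
    also have "\<dots> = (\<Sum>w\<in>{w\<in>Afuns X. pushA X Z (g \<circ> f) w = v}. \<sigma> w)"
      by (rule sum.group)
        (use assms finite_Afuns[OF \<open>finite X\<close>] finite_Afuns[OF \<open>finite Y\<close>]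
           pushA_in_Afuns pushA_comp[OF assms] in auto)
    finally show ?thesis
      using True by (simp add: pushM_def)
  qed (simp add: pushM_def)
qed

lemma pushM_id:
  assumes "\<sigma> \<in> Mfuns Y"
  shows "pushM Y Y id \<sigma> = \<sigma>"
proof
  fix v
  show "pushM Y Y id \<sigma> v = \<sigma> v"
  proof (cases "v \<in> Afuns Y")
    case True
    then have "{w\<in>Afuns Y. pushA Y Y id w = v} = {v}"
      using pushA_id by auto
    with True show ?thesis by (simp add: pushM_def)
  qed (use assms in \<open>simp add: pushM_def Mfuns_def\<close>)
qed

lemma pushM_sum: "pushM Y Z g (\<lambda>u. \<Sum>X\<in>S. F X u) = (\<lambda>v. \<Sum>X\<in>S. pushM Y Z g (F X) v)"
  unfolding pushM_def by (auto intro!: ext sum.swap)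

lemma Gmap_comp: "Gmap g (Gmap f H) = Gmap (g \<circ> f) H"
  unfolding Gmap_def by (auto simp: image_comp)

lemma finite_hypergraph:
  assumes "H \<in> hypergraphs l"
  shows "finite H" and "X \<in> H \<Longrightarrow> finite X"
proof -
  have "H \<subseteq> Pow {..<l}"
    using assms unfolding hypergraphs_def by auto
  then show "finite H" and "X \<in> H \<Longrightarrow> finite X"
    using finite_subset by auto
qed

lemma pushM_push:
  fixes \<rho> :: "nat set \<Rightarrow> (nat \<Rightarrow> 'a::{comm_monoid_add,finite}) \<Rightarrow> 'm::comm_monoid_add"
  assumes "\<And>X. X \<in> H \<Longrightarrow> finite X" and "Y \<in> Gmap f H"
  shows "pushM Y Z g (push f H \<rho> Y)
    = (\<lambda>v. \<Sum>X\<in>{X\<in>H. f ` X = Y}. pushM X Z (g \<circ> f) (\<rho> X) v)"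
proof -
  have "pushM Y Z g (push f H \<rho> Y)
      = (\<lambda>v. \<Sum>X\<in>{X\<in>H. f ` X = Y}. pushM Y Z g (pushM X Y f (\<rho> X)) v)"
    using assms(2) by (simp add: push_def pushM_sum)
  also have "\<dots> = (\<lambda>v. \<Sum>X\<in>{X\<in>H. f ` X = Y}. pushM X Z (g \<circ> f) (\<rho> X) v)"
    using assms(1) by (auto intro!: ext sum.cong simp: pushM_comp)
  finally show ?thesis .
qed

lemma push_comp:
  fixes \<rho> :: "nat set \<Rightarrow> (nat \<Rightarrow> 'a::{comm_monoid_add,finite}) \<Rightarrow> 'm::comm_monoid_add"
  assumes "finite H" and "\<And>X. X \<in> H \<Longrightarrow> finite X"
  shows "push (g \<circ> f) H \<rho> = push g (Gmap f H) (push f H \<rho>)"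
proof
  fix Z
  show "push (g \<circ> f) H \<rho> Z = push g (Gmap f H) (push f H \<rho>) Z"
  proof (cases "Z \<in> Gmap (g \<circ> f) H")
    case True
    have "(\<lambda>v. \<Sum>Y\<in>{Y\<in>Gmap f H. g ` Y = Z}. pushM Y Z g (push f H \<rho> Y) v)
        = (\<lambda>v. \<Sum>Y\<in>{Y\<in>Gmap f H. g ` Y = Z}.
             \<Sum>X\<in>{X\<in>{X\<in>H. (g \<circ> f) ` X = Z}. f ` X = Y}. pushM X Z (g \<circ> f) (\<rho> X) v)"
      using assms(2) by (intro ext sum.cong refl) (auto simp: pushM_push image_comp intro!: sum.cong)
    also have "\<dots> = (\<lambda>v. \<Sum>X\<in>{X\<in>H. (g \<circ> f) ` X = Z}. pushM X Z (g \<circ> f) (\<rho> X) v)"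
      by (intro ext sum.group) (use assms(1) in \<open>auto simp: Gmap_def image_comp\<close>)
    finally show ?thesis
      using True by (simp add: push_def Gmap_comp)
  qed (simp add: push_def Gmap_comp)
qed

lemma push_id:
  assumes "\<rho> \<in> calibrations H"
  shows "push id H \<rho> = \<rho>"
proof
  fix Y
  show "push id H \<rho> Y = \<rho> Y"
  proof (cases "Y \<in> H")
    case True
    then have "{X\<in>H. id ` X = Y} = {Y}" and "\<rho> Y \<in> Mfuns Y"
      using assms by (auto simp: calibrations_def)
    with True show ?thesis
      by (auto simp: push_def Gmap_def pushM_id)
  qed (use assms in \<open>auto simp: push_def Gmap_def calibrations_def\<close>)
qed

theorem proposition3p19:
  fixes l m n :: nat and f g :: "nat \<Rightarrow> nat" and H :: "nat set set"
  assumes "f ` {..<l} \<subseteq> {..<m}" and "g ` {..<m} \<subseteq> {..<n}" and "H \<in> hypergraphs l"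
  shows "(\<forall>\<rho>::nat set \<Rightarrow> (nat \<Rightarrow> 'a::{comm_monoid_add,finite}) \<Rightarrow> 'm::{comm_monoid_add,finite}.
           \<rho> \<in> calibrations H \<longrightarrow> push (g \<circ> f) H \<rho> = push g (Gmap f H) (push f H \<rho>)) \<and>
         (\<forall>k. \<forall>K \<in> hypergraphs k.
           \<forall>\<rho>::nat set \<Rightarrow> (nat \<Rightarrow> 'a::{comm_monoid_add,finite}) \<Rightarrow> 'm::{comm_monoid_add,finite}.
           \<rho> \<in> calibrations K \<longrightarrow> push id K \<rho> = \<rho>)"
  using push_comp[OF finite_hypergraph[OF assms(3)]] push_id by blast

end
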